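(* There is an absolute constant $C>0$ such that for all $n,m\ge3$ and $p\in(0,1)$, $$n^2\|\bar g_2\ast_2^0\bar g_2\|_2^2\le C\big(\operatorname{Var}[N_E]\big)^2\frac{1}{n^2\hat p(1-\hat p)},\qquad n^3\|\bar g_2\ast_2^1\bar g_2\|_2^2\le C\big(\operatorname{Var}[N_E]\big)^2\Big(\frac{1}{n^2\hat p(1-\hat p)}+\frac1n\Big),$$ where $N_E$ is the number of edges of $\mathcal G(n,m,p)$.
   Context: Random intersection graph $\mathcal G(n,m,p)$: vertices $v_1,\ldots,v_n$, attributes $a_1,\ldots,a_m$; each vertex chooses each attribute independently with probability $p$; two vertices are adjacent iff they chose a common attribute; $\hat p=1-(1-p^2)^m$. $\mu_{m,p}(x)=p^{|x|}(1-p)^{m-|x|}$ on $\{0,1\}^m$; $g(x,y)=1$ if $x_i=y_i=1$ for some $i$, else $0$; $\bar g_2=g-\hat p$. Norms are $L^2$ with respect to products of $\mu_{m,p}$. Contraction: for $f,h$ on $(\{0,1\}^m)^2$ and $0\le a\le 2$, $f\ast_2^ah(x_1,\ldots,x_{2-a})=\int_{(\{0,1\}^m)^a}f(w,x)h(w,x)\,d\mu_{m,p}^{\otimes a}(w)$ (so $\|\bar g_2\ast_2^0\bar g_2\|_2^2=\int\bar g_2^4$ and $\|\bar g_2\ast_2^1\bar g_2\|_2^2=\int(\int\bar g_2(x,y)^2d\mu_{m,p}(x))^2d\mu_{m,p}(y)$). *)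

theory Defs
  imports "HOL-Library.FuncSet" Complex_Main
begin

text \<open>Points of {0,1}^m are encoded as subsets of the attribute set {..<m}
  (the set of indices i with x_i = 1).\<close>

definition cube :: "nat \<Rightarrow> nat set set" where
  "cube m = Pow {..<m}"

definition mu :: "nat \<Rightarrow> real \<Rightarrow> nat set \<Rightarrow> real" where
  "mu m p x = p ^ card x * (1 - p) ^ (m - card x)"

definition g :: "nat set \<Rightarrow> nat set \<Rightarrow> real" where
  "g x y = (if x \<inter> y \<noteq> {} then 1 else 0)"

definition phat :: "nat \<Rightarrow> real \<Rightarrow> real" where
  "phat m p = 1 - (1 - p^2) ^ m"

definition gbar2 :: "nat \<Rightarrow> real \<Rightarrow> nat set \<Rightarrow> nat set \<Rightarrow> real" where
  "gbar2 m p x y = g x y - phat m p"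

definition contr0 :: "(nat set \<Rightarrow> nat set \<Rightarrow> real) \<Rightarrow> (nat set \<Rightarrow> nat set \<Rightarrow> real)
    \<Rightarrow> nat set \<Rightarrow> nat set \<Rightarrow> real" where
  "contr0 f h x1 x2 = f x1 x2 * h x1 x2"

definition contr1 :: "nat \<Rightarrow> real \<Rightarrow> (nat set \<Rightarrow> nat set \<Rightarrow> real) \<Rightarrow> (nat set \<Rightarrow> nat set \<Rightarrow> real)
    \<Rightarrow> nat set \<Rightarrow> real" where
  "contr1 m p f h x = (\<Sum>w\<in>cube m. mu m p w * (f w x * h w x))"

definition L2sq1 :: "nat \<Rightarrow> real \<Rightarrow> (nat set \<Rightarrow> real) \<Rightarrow> real" where
  "L2sq1 m p F = (\<Sum>x\<in>cube m. mu m p x * (F x)^2)"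

definition L2sq2 :: "nat \<Rightarrow> real \<Rightarrow> (nat set \<Rightarrow> nat set \<Rightarrow> real) \<Rightarrow> real" where
  "L2sq2 m p F = (\<Sum>x\<in>cube m. \<Sum>y\<in>cube m. mu m p x * mu m p y * (F x y)^2)"

text \<open>The random intersection graph G(n,m,p): a configuration assigns to each
  vertex i < n its attribute set X i; configurations are weighted by the product
  of mu.\<close>
definition configs :: "nat \<Rightarrow> nat \<Rightarrow> (nat \<Rightarrow> nat set) set" where
  "configs n m = PiE {..<n} (\<lambda>_. cube m)"

definition weight :: "nat \<Rightarrow> nat \<Rightarrow> real \<Rightarrow> (nat \<Rightarrow> nat set) \<Rightarrow> real" where
  "weight n m p X = (\<Prod>i<n. mu m p (X i))"

definition num_edges :: "nat \<Rightarrow> (nat \<Rightarrow> nat set) \<Rightarrow> real" where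
  "num_edges n X = real (card {(i, j). i < j \<and> j < n \<and> X i \<inter> X j \<noteq> {}})"

definition expect :: "nat \<Rightarrow> nat \<Rightarrow> real \<Rightarrow> ((nat \<Rightarrow> nat set) \<Rightarrow> real) \<Rightarrow> real" where
  "expect n m p F = (\<Sum>X\<in>configs n m. weight n m p X * F X)"

definition var_edges :: "nat \<Rightarrow> nat \<Rightarrow> real \<Rightarrow> real" where
  "var_edges n m p =
     expect n m p (\<lambda>X. (num_edges n X - expect n m p (num_edges n))^2)"

end

theory Submission
  imports Defs
begin

(* Twice the edge count is the U-statistic sum_{i ~= j} g(X_i, X_j) of the independent
   attribute sets X_i. Hoeffding's decomposition g = phat + h1(x) + h1(y) + h2(x, y) into
   orthogonal parts gives Var N_E = n(n-1)/2 V2 + n(n-1)^2 V1, where Vk is the variance of hk,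
   and V2 + 2 V1 = Var g = phat (1 - phat) =: D because g is 0/1-valued. Hence
   Var N_E >= n(n-1) D / 2 and Var N_E >= n(n-1)^2 V1. On the other side, |g - phat| <= 1
   gives int gbar^4 <= D, and the inner integral of gbar^2 equals (1 - 2 phat) h1 + D, so
   the second contraction has squared norm at most V1 + D^2. For n >= 3 both estimates
   follow with C = 9. *)

locale sym_kernel =
  fixes A :: "'a set" and w :: "'a \<Rightarrow> real" and k :: "'a \<Rightarrow> 'a \<Rightarrow> real"
  assumes finite_A [simp]: "finite A"
    and w_nonneg: "x \<in> A \<Longrightarrow> 0 \<le> w x"
    and sum_w [simp]: "sum w A = 1"
    and k_sym: "k x y = k y x"
begin

definition mean :: "('a \<Rightarrow> real) \<Rightarrow> real" where
  "mean f = (\<Sum>x\<in>A. w x * f x)"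

definition mean2 :: "('a \<Rightarrow> 'a \<Rightarrow> real) \<Rightarrow> real" where
  "mean2 f = (\<Sum>x\<in>A. \<Sum>y\<in>A. w x * w y * f x y)"

lemma mean_add [simp]: "mean (\<lambda>x. f x + h x) = mean f + mean h"
  by (simp add: mean_def distrib_left sum.distrib)

lemma mean_diff [simp]: "mean (\<lambda>x. f x - h x) = mean f - mean h"
  by (simp add: mean_def right_diff_distrib sum_subtractf)

lemma mean_mult_left [simp]: "mean (\<lambda>x. c * f x) = c * mean f"
  by (simp add: mean_def sum_distrib_left mult_ac)

lemma mean_mult_right [simp]: "mean (\<lambda>x. f x * c) = mean f * c"
  by (simp add: mean_def sum_distrib_right mult_ac)

lemma mean_const [simp]: "mean (\<lambda>x. c) = c"
  by (simp add: mean_def flip: sum_distrib_right)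

lemma mean_mono: "(\<And>x. x \<in> A \<Longrightarrow> f x \<le> h x) \<Longrightarrow> mean f \<le> mean h"
  unfolding mean_def by (intro sum_mono mult_left_mono) (auto simp: w_nonneg)

lemma mean2_iterated: "mean2 f = mean (\<lambda>x. mean (f x))"
  by (simp add: mean2_def mean_def sum_distrib_left mult_ac)

lemma mean2_swap: "mean2 f = mean2 (\<lambda>x y. f y x)"
  unfolding mean2_def by (subst sum.swap) (simp add: mult_ac)

lemma mean2_mono:
  "(\<And>x y. x \<in> A \<Longrightarrow> y \<in> A \<Longrightarrow> f x y \<le> h x y) \<Longrightarrow> mean2 f \<le> mean2 h"
  unfolding mean2_iterated by (intro mean_mono) simp

definition theta :: real where
  "theta = mean2 k"

definition proj1 :: "'a \<Rightarrow> real" where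
  "proj1 x = mean (k x) - theta"

definition proj2 :: "'a \<Rightarrow> 'a \<Rightarrow> real" where
  "proj2 x y = k x y - mean (k x) - mean (k y) + theta"

definition var1 :: real where
  "var1 = mean (\<lambda>x. (proj1 x)\<^sup>2)"

definition var2 :: real where
  "var2 = mean2 (\<lambda>x y. (proj2 x y)\<^sup>2)"

definition var_kernel :: real where
  "var_kernel = mean2 (\<lambda>x y. (k x y - theta)\<^sup>2)"

lemma kernel_decomp: "k x y = theta + proj1 x + proj1 y + proj2 x y"
  by (simp add: proj1_def proj2_def)

lemma proj2_sym: "proj2 x y = proj2 y x"
  by (simp add: proj2_def k_sym)

lemma mean_proj1: "mean proj1 = 0"
  unfolding proj1_def[abs_def] by (simp add: theta_def mean2_iterated)

lemma mean_proj2: "mean (proj2 x) = 0"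
  unfolding proj2_def[abs_def] by (simp add: theta_def mean2_iterated)

lemma mean_proj2': "mean (\<lambda>x. proj2 x y) = 0"
  by (subst proj2_sym) (rule mean_proj2)

lemma var1_nonneg: "0 \<le> var1"
  unfolding var1_def mean_def by (intro sum_nonneg) (simp add: w_nonneg)

lemma var2_nonneg: "0 \<le> var2"
  unfolding var2_def mean2_def by (intro sum_nonneg) (simp add: w_nonneg)

lemma var_kernel_decomp: "var_kernel = var2 + 2 * var1"
proof -
  have cross: "mean2 (\<lambda>x y. proj2 x y * proj1 y) = 0"
    by (subst mean2_swap) (simp add: mean2_iterated mean_proj2')
  have "(k x y - theta)\<^sup>2 = (proj2 x y)\<^sup>2 + (proj1 x)\<^sup>2 + (proj1 y)\<^sup>2
      + 2 * proj1 x * proj2 x y + 2 * (proj2 x y * proj1 y) + 2 * proj1 x * proj1 y" for x y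
    by (subst kernel_decomp) (simp add: power2_eq_square algebra_simps)
  then show ?thesis
    unfolding var_kernel_def
    using cross by (simp add: mean2_iterated mean_proj1 mean_proj2 var1_def var2_def)
qed

end

lemma sum_offdiag_left:
  "(\<Sum>i<n. \<Sum>j\<in>{..<n} - {i}. a i) = real (n - 1) * (\<Sum>i<n. a i :: real)"
  by (simp add: sum_distrib_left)

lemma sum_offdiag_right:
  "(\<Sum>i<n. \<Sum>j\<in>{..<n} - {i}. a j) = real (n - 1) * (\<Sum>i<n. a i :: real)"
proof -
  have "(\<Sum>i<n. \<Sum>j\<in>{..<n} - {i}. a j) = (\<Sum>i<n. (\<Sum>j<n. a j) - a i)"
    by (intro sum.cong) (auto simp: sum_diff1)
  also have "\<dots> = real (n - 1) * (\<Sum>i<n. a i)"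
    by (cases n) (auto simp: sum_subtractf algebra_simps)
  finally show ?thesis .
qed

context sym_kernel
begin

definition E :: "nat \<Rightarrow> ((nat \<Rightarrow> 'a) \<Rightarrow> real) \<Rightarrow> real" where
  "E n F = (\<Sum>X\<in>PiE {..<n} (\<lambda>_. A). (\<Prod>i<n. w (X i)) * F X)"

lemma E_split:
  assumes "j < n"
  shows "E n F = (\<Sum>G\<in>PiE ({..<n} - {j}) (\<lambda>_. A).
    (\<Prod>i\<in>{..<n} - {j}. w (G i)) * mean (\<lambda>y. F (G(j := y))))"
proof -
  let ?K = "{..<n} - {j}"
  let ?Q = "PiE ?K (\<lambda>_. A)"
  let ?upd = "\<lambda>(y, G). G(j := y)"
  have n_eq: "{..<n} = insert j ?K" using assms by auto
  have weight_upd: "(\<Prod>i<n. w (?upd z i)) = w (fst z) * (\<Prod>i\<in>?K. w (snd z i))" for z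
  proof -
    have "(\<Prod>i<n. w (?upd z i)) = (\<Prod>i\<in>insert j ?K. w (?upd z i))"
      by (simp only: n_eq[symmetric])
    also have "\<dots> = w (fst z) * (\<Prod>i\<in>?K. w (snd z i))"
      by (subst prod.insert) (auto simp: split_def intro!: prod.cong)
    finally show ?thesis .
  qed
  have PiE_eq: "PiE {..<n} (\<lambda>_. A) = ?upd ` (A \<times> ?Q)"
    by (subst n_eq) (rule PiE_insert_eq)
  have inj: "inj_on ?upd (A \<times> ?Q)"
    by (rule inj_combinator) simp
  have "E n F = (\<Sum>z\<in>A \<times> ?Q. (\<Prod>i<n. w (?upd z i)) * F (?upd z))"
    unfolding E_def PiE_eq sum.reindex[OF inj] by (simp add: comp_def)
  also have "\<dots> = (\<Sum>y\<in>A. \<Sum>G\<in>?Q. w y * (\<Prod>i\<in>?K. w (G i)) * F (G(j := y)))"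
    unfolding weight_upd sum.cartesian_product by (simp add: split_def)
  also have "\<dots> = (\<Sum>G\<in>?Q. (\<Prod>i\<in>?K. w (G i)) * mean (\<lambda>y. F (G(j := y))))"
    by (subst sum.swap) (simp add: mean_def sum_distrib_left mult.assoc mult.left_commute)
  finally show ?thesis .
qed

lemma E_resample:
  assumes "j < n"
  shows "E n F = E n (\<lambda>X. mean (\<lambda>y. F (X(j := y))))"
  unfolding E_split[OF assms, of F] E_split[OF assms, of "\<lambda>X. mean (\<lambda>y. F (X(j := y)))"]
  by simp

lemma E_vanish:
  assumes "j < n" and "\<And>X. mean (\<lambda>y. F (X(j := y))) = 0"
  shows "E n F = 0"
  by (subst E_resample[OF assms(1)]) (simp add: assms(2) E_def)

lemma E_const [simp]: "E n (\<lambda>X. c) = c"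
proof -
  have "(\<Sum>X\<in>PiE {..<n} (\<lambda>_. A). \<Prod>i<n. w (X i)) = (\<Prod>i<n. sum w A)"
    by (subst prod_sum_PiE) auto
  then show ?thesis by (simp add: E_def flip: sum_distrib_right)
qed

lemma E_add [simp]: "E n (\<lambda>X. F X + G X) = E n F + E n G"
  by (simp add: E_def distrib_left sum.distrib)

lemma E_mult_left [simp]: "E n (\<lambda>X. c * F X) = c * E n F"
  by (simp add: E_def sum_distrib_left mult_ac)

lemma E_sum: "E n (\<lambda>X. \<Sum>i\<in>I. F i X) = (\<Sum>i\<in>I. E n (F i))"
  unfolding E_def sum_distrib_left by (rule sum.swap)

lemma E_coord:
  assumes "i < n"
  shows "E n (\<lambda>X. f (X i)) = mean f"
  by (subst E_resample[OF assms]) simp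

lemma E_coord2:
  assumes "i < n" "j < n" "i \<noteq> j"
  shows "E n (\<lambda>X. f (X i) (X j)) = mean2 f"
proof -
  have "E n (\<lambda>X. f (X i) (X j)) = E n (\<lambda>X. mean (\<lambda>x. f x (X j)))"
    using assms by (subst E_resample[OF assms(1)]) simp
  also have "\<dots> = mean (\<lambda>y. mean (\<lambda>x. f x y))"
    by (rule E_coord[OF assms(2)])
  finally show ?thesis by (subst mean2_swap) (simp add: mean2_iterated)
qed

lemma E_proj1_indep:
  assumes "j < n" and "\<And>X y. G (X(j := y)) = G X"
  shows "E n (\<lambda>X. proj1 (X j) * G X) = 0"
  by (rule E_vanish[OF assms(1)]) (simp add: assms(2) mean_proj1)

lemma E_proj2_indep:
  assumes "i \<noteq> j" "j < n" and "\<And>X y. G (X(j := y)) = G X"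
  shows "E n (\<lambda>X. proj2 (X i) (X j) * G X) = 0"
  by (rule E_vanish[OF assms(2)]) (simp add: assms mean_proj2)

lemma E_proj1_proj1:
  assumes "i < n" "l < n"
  shows "E n (\<lambda>X. proj1 (X i) * proj1 (X l)) = (if i = l then var1 else 0)"
proof (cases "i = l")
  case True
  then show ?thesis using E_coord[OF assms(1), of "\<lambda>x. (proj1 x)\<^sup>2"]
    by (simp add: var1_def power2_eq_square)
next
  case False
  then show ?thesis
    using E_proj1_indep[OF assms(1), of "\<lambda>X. proj1 (X l)"] by simp
qed

lemma E_proj2_proj1:
  assumes "i < n" "j < n" "i \<noteq> j" "l < n"
  shows "E n (\<lambda>X. proj2 (X i) (X j) * proj1 (X l)) = 0"
proof (cases "l = j")
  case True
  then show ?thesis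
    using assms E_proj2_indep[of j i n "\<lambda>X. proj1 (X l)"] by (simp add: proj2_sym)
next
  case False
  then show ?thesis
    using assms E_proj2_indep[of i j n "\<lambda>X. proj1 (X l)"] by simp
qed

(* Unless {r, s} = {i, j}, some index occurs in one factor only; integrating it out gives 0. *)
lemma E_proj2_proj2:
  assumes "i < n" "j < n" "i \<noteq> j" "r < n" "s < n" "r \<noteq> s"
  shows "E n (\<lambda>X. proj2 (X i) (X j) * proj2 (X r) (X s))
    = (if (r = i \<and> s = j) \<or> (r = j \<and> s = i) then var2 else 0)"
proof -
  consider "r = i \<and> s = j" | "r = j \<and> s = i" | "j \<noteq> r \<and> j \<noteq> s" | "i \<noteq> r \<and> i \<noteq> s"
    using assms by blast
  then show ?thesis
  proof cases
    case 1
    then show ?thesis using E_coord2[OF assms(1-3), of "\<lambda>x y. (proj2 x y)\<^sup>2"]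
      by (simp add: var2_def power2_eq_square)
  next
    case 2
    then show ?thesis using assms E_coord2[OF assms(1-3), of "\<lambda>x y. (proj2 x y)\<^sup>2"]
      by (simp add: var2_def power2_eq_square proj2_sym[of "X j" "X i" for X])
  next
    case 3
    then show ?thesis
      using assms E_proj2_indep[of i j n "\<lambda>X. proj2 (X r) (X s)"] by auto
  next
    case 4
    then show ?thesis
      using assms E_proj2_indep[of j i n "\<lambda>X. proj2 (X r) (X s)"] by (auto simp: proj2_sym)
  qed
qed

definition ustat :: "nat \<Rightarrow> (nat \<Rightarrow> 'a) \<Rightarrow> real" where
  "ustat n X = (\<Sum>i<n. \<Sum>j\<in>{..<n} - {i}. k (X i) (X j))"

definition ustat1 :: "nat \<Rightarrow> (nat \<Rightarrow> 'a) \<Rightarrow> real" where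
  "ustat1 n X = (\<Sum>i<n. proj1 (X i))"

definition ustat2 :: "nat \<Rightarrow> (nat \<Rightarrow> 'a) \<Rightarrow> real" where
  "ustat2 n X = (\<Sum>i<n. \<Sum>j\<in>{..<n} - {i}. proj2 (X i) (X j))"

lemma ustat_decomp:
  "ustat n X = real n * real (n - 1) * theta + 2 * real (n - 1) * ustat1 n X + ustat2 n X"
proof -
  have "ustat n X = (\<Sum>i<n. \<Sum>j\<in>{..<n} - {i}. theta) + (\<Sum>i<n. \<Sum>j\<in>{..<n} - {i}. proj1 (X i))
      + (\<Sum>i<n. \<Sum>j\<in>{..<n} - {i}. proj1 (X j)) + ustat2 n X"
    unfolding ustat_def ustat2_def kernel_decomp[of "X _"] by (simp only: sum.distrib)
  then show ?thesis
    by (simp only: sum_offdiag_left sum_offdiag_right ustat1_def) (simp add: algebra_simps)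
qed

lemma E_ustat1: "E n (ustat1 n) = 0"
  unfolding ustat1_def[abs_def] E_sum by (simp add: E_coord mean_proj1)

lemma E_ustat2: "E n (ustat2 n) = 0"
  unfolding ustat2_def[abs_def] E_sum by (simp add: E_coord2 mean2_iterated mean_proj2)

lemma E_ustat: "E n (ustat n) = real n * real (n - 1) * theta"
  unfolding ustat_decomp[abs_def] by (simp add: E_ustat1 E_ustat2)

lemma E_ustat1_sq: "E n (\<lambda>X. (ustat1 n X)\<^sup>2) = real n * var1"
  unfolding ustat1_def power2_eq_square sum_product E_sum by (simp add: E_proj1_proj1)

lemma E_ustat1_ustat2: "E n (\<lambda>X. ustat1 n X * ustat2 n X) = 0"
  unfolding ustat1_def ustat2_def sum_distrib_left sum_distrib_right E_sum
  by (simp add: mult.commute[of "proj1 _"] E_proj2_proj1)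

lemma E_ustat2_sq: "E n (\<lambda>X. (ustat2 n X)\<^sup>2) = 2 * real n * real (n - 1) * var2"
proof -
  have pair: "(\<Sum>r<n. \<Sum>s\<in>{..<n} - {r}. E n (\<lambda>X. proj2 (X i) (X j) * proj2 (X r) (X s)))
      = 2 * var2" if "i < n" "j < n" "i \<noteq> j" for i j
  proof -
    have "(\<Sum>r<n. \<Sum>s\<in>{..<n} - {r}. E n (\<lambda>X. proj2 (X i) (X j) * proj2 (X r) (X s)))
        = (\<Sum>r<n. \<Sum>s\<in>{..<n} - {r}. (if r = i then if s = j then var2 else 0 else 0)
            + (if r = j then if s = i then var2 else 0 else 0))"
      using that by (intro sum.cong refl) (auto simp: E_proj2_proj2)
    also have "\<dots> = 2 * var2"
    proof -
      have delta: "(\<Sum>s\<in>{..<n} - {r}. if r = a then if s = b then var2 else 0 else 0)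
          = (if r = a then var2 else 0)" if "a \<noteq> b" "b < n" for r a b
        using that by auto
      show ?thesis using that by (simp add: sum.distrib delta)
    qed
    finally show ?thesis .
  qed
  have "E n (\<lambda>X. (ustat2 n X)\<^sup>2) = (\<Sum>i<n. \<Sum>j\<in>{..<n} - {i}. 2 * var2)"
    unfolding ustat2_def power2_eq_square sum_distrib_right
    unfolding sum_distrib_left E_sum by (simp add: pair)
  then show ?thesis
    by (cases n) simp_all
qed


lemma var_ustat:
  "E n (\<lambda>X. (ustat n X - E n (ustat n))\<^sup>2)
    = 2 * real n * (real n - 1) * var_kernel + 4 * real n * (real n - 1) * (real n - 2) * var1"
proof -
  let ?c = "2 * real (n - 1)"
  have "(\<lambda>X. (ustat n X - E n (ustat n))\<^sup>2)
      = (\<lambda>X. (ustat2 n X)\<^sup>2 + 2 * ?c * (ustat1 n X * ustat2 n X) + ?c\<^sup>2 * (ustat1 n X)\<^sup>2)"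
    by (simp add: E_ustat ustat_decomp power2_eq_square algebra_simps)
  then have "E n (\<lambda>X. (ustat n X - E n (ustat n))\<^sup>2)
      = 2 * real n * real (n - 1) * var2 + ?c\<^sup>2 * (real n * var1)"
    by (simp add: E_ustat1_sq E_ustat2_sq E_ustat1_ustat2)
  then show ?thesis
    unfolding var_kernel_decomp by (cases n) (simp_all add: power2_eq_square algebra_simps)
qed

end

locale indicator_kernel = sym_kernel +
  assumes k_01: "k x y = 0 \<or> k x y = 1"
begin

lemma k_bounds: "0 \<le> k x y" "k x y \<le> 1"
  using k_01[of x y] by auto

lemma theta_bounds: "0 \<le> theta" "theta \<le> 1"
proof -
  have "mean2 (\<lambda>_ _. 0) \<le> mean2 k" "mean2 k \<le> mean2 (\<lambda>_ _. 1)"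
    by (intro mean2_mono; simp add: k_bounds)+
  then show "0 \<le> theta" "theta \<le> 1"
    by (simp_all add: theta_def mean2_iterated)
qed

lemma centered_kernel_sq: "(k x y - theta)\<^sup>2 = (1 - 2 * theta) * k x y + theta\<^sup>2"
  using k_01[of x y] by (auto simp: power2_eq_square algebra_simps)

lemma var_kernel_eq: "var_kernel = theta * (1 - theta)"
  unfolding var_kernel_def centered_kernel_sq
  by (simp add: mean2_iterated theta_def power2_eq_square algebra_simps)

lemma centered_fourth_moment_le:
  "mean2 (\<lambda>x y. ((k x y - theta) * (k x y - theta))\<^sup>2) \<le> var_kernel"
  unfolding var_kernel_def
proof (rule mean2_mono)
  fix x y
  have "\<bar>k x y - theta\<bar> \<le> 1"
    using k_bounds[of x y] theta_bounds by auto
  then have "(k x y - theta)\<^sup>2 \<le> 1"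
    by (simp add: abs_le_square_iff[of _ 1, simplified])
  then show "((k x y - theta) * (k x y - theta))\<^sup>2 \<le> (k x y - theta)\<^sup>2"
    by (simp add: power2_eq_square mult_left_le)
qed

lemma contraction1_eq:
  "mean (\<lambda>w. (k w x - theta) * (k w x - theta)) = (1 - 2 * theta) * proj1 x + var_kernel"
proof -
  have "mean (\<lambda>w. (k w x - theta) * (k w x - theta))
      = mean (\<lambda>w. (1 - 2 * theta) * k x w + theta\<^sup>2)"
    by (simp only: centered_kernel_sq[unfolded power2_eq_square] k_sym[of _ x] power2_eq_square)
  then show ?thesis
    by (simp add: proj1_def var_kernel_eq power2_eq_square algebra_simps)
qed

lemma contraction1_sq_le:
  "mean (\<lambda>x. (mean (\<lambda>w. (k w x - theta) * (k w x - theta)))\<^sup>2) \<le> var1 + var_kernel\<^sup>2"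
proof -
  have "mean (\<lambda>x. (mean (\<lambda>w. (k w x - theta) * (k w x - theta)))\<^sup>2)
      = (1 - 2 * theta)\<^sup>2 * var1 + var_kernel\<^sup>2"
    unfolding contraction1_eq by (simp add: power2_sum power_mult_distrib mean_proj1 var1_def)
  also have "\<dots> \<le> var1 + var_kernel\<^sup>2"
  proof -
    have "(1 - 2 * theta)\<^sup>2 \<le> 1\<^sup>2"
      using theta_bounds by (subst abs_le_square_iff[symmetric]) auto
    then show ?thesis
      using var1_nonneg by (simp add: mult_left_le_one_le)
  qed
  finally show ?thesis .
qed

end

lemma sum_Pow_binomial:
  fixes a b :: "'a::comm_semiring_1"
  assumes "finite A"
  shows "(\<Sum>X\<in>Pow A. a ^ card X * b ^ (card A - card X)) = (a + b) ^ card A"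
proof -
  have "(a + b) ^ card A = (\<Sum>X\<in>Pow A. (\<Prod>x\<in>X. a) * (\<Prod>x\<in>A - X. b))"
    using prod_add[OF assms, of "\<lambda>_. a" "\<lambda>_. b"] by simp
  also have "\<dots> = (\<Sum>X\<in>Pow A. a ^ card X * b ^ (card A - card X))"
    using assms by (intro sum.cong) (auto simp: card_Diff_subset finite_subset)
  finally show ?thesis ..
qed

lemma finite_cube [simp]: "finite (cube m)"
  by (simp add: cube_def)

lemma mu_nonneg: "0 \<le> p \<Longrightarrow> p \<le> 1 \<Longrightarrow> 0 \<le> mu m p x"
  by (simp add: mu_def)

lemma sum_mu_cube: "sum (mu m p) (cube m) = 1"
  using sum_Pow_binomial[of "{..<m}" p "1 - p"] by (simp add: cube_def mu_def)

lemma sum_mu_avoiding: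
  assumes "x \<subseteq> {..<m}"
  shows "(\<Sum>y\<in>Pow ({..<m} - x). mu m p y) = (1 - p) ^ card x"
proof -
  let ?B = "{..<m} - x"
  have card_B: "card ?B = m - card x"
    using assms by (simp add: card_Diff_subset finite_subset)
  have "mu m p y = (1 - p) ^ card x * (p ^ card y * (1 - p) ^ (card ?B - card y))" if "y \<subseteq> ?B" for y
  proof -
    have "card y \<le> card ?B" using that by (simp add: card_mono)
    moreover have "card x \<le> m" using assms by (metis card_lessThan card_mono finite_lessThan)
    ultimately have "m - card y = card x + (card ?B - card y)" using card_B by linarith
    then show ?thesis by (simp add: mu_def power_add)
  qed
  then have "(\<Sum>y\<in>Pow ?B. mu m p y)
      = (1 - p) ^ card x * (\<Sum>y\<in>Pow ?B. p ^ card y * (1 - p) ^ (card ?B - card y))"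
    by (simp add: sum_distrib_left)
  also have "\<dots> = (1 - p) ^ card x"
    by (subst sum_Pow_binomial) simp_all
  finally show ?thesis .
qed

lemma sum_mu_g:
  assumes "x \<in> cube m"
  shows "(\<Sum>y\<in>cube m. mu m p y * g x y) = 1 - (1 - p) ^ card x"
proof -
  have "(\<Sum>y\<in>Pow ({..<m} - x). mu m p y) = (\<Sum>y\<in>cube m. mu m p y * (1 - g x y))"
    by (rule sum.mono_neutral_cong_left) (auto simp: cube_def g_def)
  then show ?thesis
    using assms sum_mu_avoiding[of x m p]
    by (simp add: cube_def right_diff_distrib sum_subtractf sum_mu_cube[unfolded cube_def])
qed

lemma indicator_kernel_cube: "0 \<le> p \<Longrightarrow> p \<le> 1 \<Longrightarrow> indicator_kernel (cube m) (mu m p) g"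
  by unfold_locales (auto simp: mu_nonneg sum_mu_cube g_def)

lemma phat_bounds:
  assumes "0 < p" "p < 1" "0 < m"
  shows "0 < phat m p" "phat m p < 1"
proof -
  have "0 < 1 - p\<^sup>2" "1 - p\<^sup>2 < 1"
    using assms by (auto simp: power_less_one_iff)
  then show "0 < phat m p" "phat m p < 1"
    using assms power_less_one_iff[of "1 - p\<^sup>2" m] by (simp_all add: phat_def)
qed

context
  fixes m :: nat and p :: real
  assumes p_bounds: "0 \<le> p" "p \<le> 1"
begin

interpretation cube: indicator_kernel "cube m" "mu m p" g
  using p_bounds by (rule indicator_kernel_cube)

lemma theta_cube: "cube.theta = phat m p"
proof -
  have "cube.theta = (\<Sum>x\<in>cube m. mu m p x * (1 - (1 - p) ^ card x))"
    unfolding cube.theta_def cube.mean2_def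
    by (simp add: mult.assoc sum_mu_g flip: sum_distrib_left)
  also have "\<dots> = 1 - (\<Sum>x\<in>cube m. (p * (1 - p)) ^ card x * (1 - p) ^ (card {..<m} - card x))"
  proof -
    have "mu m p x * (1 - p) ^ card x = (p * (1 - p)) ^ card x * (1 - p) ^ (card {..<m} - card x)" for x
      by (simp add: mu_def power_mult_distrib)
    then show ?thesis
      by (simp add: right_diff_distrib sum_subtractf sum_mu_cube)
  qed
  also have "\<dots> = phat m p"
    unfolding cube_def by (subst sum_Pow_binomial) (simp_all add: phat_def power2_eq_square algebra_simps)
  finally show ?thesis .
qed

lemma twice_num_edges: "2 * num_edges n X = cube.ustat n X"
proof -
  let ?pairs = "{(i, j). i < j \<and> j < n}"
  let ?edge = "\<lambda>(i, j). g (X i) (X j)"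
  have finite_pairs: "finite ?pairs"
    by (rule finite_subset[of _ "{..<n} \<times> {..<n}"]) auto
  have "cube.ustat n X = sum ?edge (Sigma {..<n} (\<lambda>i. {..<n} - {i}))"
    unfolding cube.ustat_def by (subst sum.Sigma) auto
  also have "Sigma {..<n} (\<lambda>i. {..<n} - {i}) = ?pairs \<union> prod.swap ` ?pairs"
    by auto
  also have "sum ?edge (?pairs \<union> prod.swap ` ?pairs) = sum ?edge ?pairs + sum ?edge (prod.swap ` ?pairs)"
    using finite_pairs by (intro sum.union_disjoint) auto
  also have "sum ?edge (prod.swap ` ?pairs) = sum ?edge ?pairs"
    by (subst sum.reindex) (auto simp: g_def inf_commute)
  also have "sum ?edge ?pairs = num_edges n X"
    using finite_pairs
    by (simp add: num_edges_def g_def split_def Int_def of_bool_def[symmetric])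
  finally show ?thesis by simp
qed

lemma expect_cube: "expect n m p = cube.E n"
  by (intro ext) (simp add: expect_def cube.E_def configs_def weight_def)

lemma var_edges_cube:
  "var_edges n m p = real n * (real n - 1) * (phat m p * (1 - phat m p)) / 2
    + real n * (real n - 1) * (real n - 2) * cube.var1"
proof -
  have "num_edges n = (\<lambda>X. (1 / 2) * cube.ustat n X)"
    using twice_num_edges by (intro ext) (simp add: field_simps)
  then have "var_edges n m p = (1 / 4) * cube.E n (\<lambda>X. (cube.ustat n X - cube.E n (cube.ustat n))\<^sup>2)"
    unfolding var_edges_def expect_cube by (simp add: power2_eq_square algebra_simps flip: cube.E_mult_left)
  then show ?thesis
    by (simp add: cube.var_ustat cube.var_kernel_eq theta_cube)
qed

lemma var1_cube_le: "2 * cube.var1 \<le> phat m p * (1 - phat m p)"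
  using cube.var_kernel_decomp cube.var2_nonneg by (simp add: cube.var_kernel_eq theta_cube)

lemma var_edges_ge_kernel:
  "real n * (real n - 1) * (phat m p * (1 - phat m p)) / 2 \<le> var_edges n m p"
proof -
  have "0 \<le> real n * (real n - 1) * (real n - 2)"
  proof (cases "2 \<le> n")
    case False
    then have "n = 0 \<or> n = 1" by auto
    then show ?thesis by auto
  qed simp
  from mult_nonneg_nonneg[OF this cube.var1_nonneg] show ?thesis
    unfolding var_edges_cube by linarith
qed

lemma var_edges_ge_var1: "real n * (real n - 1)\<^sup>2 * cube.var1 \<le> var_edges n m p"
proof -
  have "var_edges n m p - real n * (real n - 1)\<^sup>2 * cube.var1
      = real n * (real n - 1) * (phat m p * (1 - phat m p) / 2 - cube.var1)"
    by (simp add: var_edges_cube power2_eq_square algebra_simps)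
  moreover have "0 \<le> real n * (real n - 1)"
    by (cases n) auto
  moreover have "0 \<le> phat m p * (1 - phat m p) / 2 - cube.var1"
    using var1_cube_le by simp
  ultimately have "0 \<le> var_edges n m p - real n * (real n - 1)\<^sup>2 * cube.var1"
    by simp
  then show ?thesis by simp
qed

lemma L2sq2_contr0_le: "L2sq2 m p (contr0 (gbar2 m p) (gbar2 m p)) \<le> phat m p * (1 - phat m p)"
  using cube.centered_fourth_moment_le
  by (simp add: L2sq2_def contr0_def gbar2_def cube.mean2_def cube.var_kernel_eq theta_cube)

lemma L2sq1_contr1_le:
  "L2sq1 m p (contr1 m p (gbar2 m p) (gbar2 m p)) \<le> cube.var1 + (phat m p * (1 - phat m p))\<^sup>2"
  using cube.contraction1_sq_le
  by (simp add: L2sq1_def contr1_def gbar2_def cube.mean_def cube.var_kernel_eq theta_cube)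

end

lemma contr0_estimate:
  fixes N D V L :: real
  assumes N: "3 \<le> N" and D: "0 < D" and V: "N * (N - 1) * D / 2 \<le> V" and L: "L \<le> D"
  shows "N\<^sup>2 * L \<le> 9 * V\<^sup>2 * (1 / (N\<^sup>2 * D))"
proof -
  have "2 * N \<le> 3 * (N - 1)" using N by simp
  then have "(2 * N)\<^sup>2 \<le> (3 * (N - 1))\<^sup>2"
    using N by (intro power_mono) simp_all
  then have sq: "4 * N\<^sup>2 \<le> 9 * (N - 1)\<^sup>2"
    by (simp only: power_mult_distrib) simp
  have "N\<^sup>2 * L \<le> N\<^sup>2 * D"
    using L by (simp add: mult_left_mono)
  also have "\<dots> \<le> (9 * (N - 1)\<^sup>2 / 4) * D"
    using sq D by (intro mult_right_mono) auto
  also have "\<dots> = 9 * (N * (N - 1) * D / 2)\<^sup>2 / (N\<^sup>2 * D)"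
    using N D by (simp add: field_simps power2_eq_square)
  also have "\<dots> \<le> 9 * V\<^sup>2 / (N\<^sup>2 * D)"
    using N D V by (intro divide_right_mono mult_left_mono power_mono) auto
  finally show ?thesis by simp
qed

lemma contr1_estimate:
  fixes N D W V L :: real
  assumes N: "3 \<le> N" and D: "0 < D" and W: "0 \<le> W"
    and V_D: "N * (N - 1) * D / 2 \<le> V" and V_W: "N * (N - 1)\<^sup>2 * W \<le> V"
    and L: "L \<le> W + D\<^sup>2"
  shows "N ^ 3 * L \<le> 9 * V\<^sup>2 * (1 / (N\<^sup>2 * D) + 1 / N)"
proof -
  define a where "a = N * (N - 1) * D / 2"
  define b where "b = N * (N - 1)\<^sup>2 * W"
  have "0 \<le> a" "a \<le> V" "0 \<le> b" "b \<le> V"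
    using N D W V_D V_W by (simp_all add: a_def b_def)
  then have Va: "a\<^sup>2 \<le> V\<^sup>2" and Vab: "a * b \<le> V\<^sup>2"
    by (simp_all add: power_mono power2_eq_square mult_mono)
  have ratio: "2 * N \<le> 3 * (N - 1)" using N by simp
  have "(2 * N)\<^sup>2 \<le> (3 * (N - 1))\<^sup>2" "(2 * N) ^ 3 \<le> (3 * (N - 1)) ^ 3"
    using N by (intro power_mono[OF ratio], simp)+
  then have sq: "4 * N\<^sup>2 \<le> 9 * (N - 1)\<^sup>2" and cb: "8 * N ^ 3 \<le> 27 * (N - 1) ^ 3"
    by (simp_all only: power_mult_distrib) simp_all
  have "N ^ 3 * D\<^sup>2 = N\<^sup>2 * (N * D\<^sup>2)"
    by (simp add: power2_eq_square power3_eq_cube)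
  also have "\<dots> \<le> (9 * (N - 1)\<^sup>2 / 4) * (N * D\<^sup>2)"
    using sq N by (intro mult_right_mono) auto
  also have "\<dots> = 9 * a\<^sup>2 / N"
    using N by (simp add: a_def field_simps power2_eq_square)
  also have "\<dots> \<le> 9 * V\<^sup>2 / N"
    using Va N by (simp add: divide_right_mono)
  finally have D_part: "N ^ 3 * D\<^sup>2 \<le> 9 * V\<^sup>2 / N" .
  have "0 \<le> (N - 1) ^ 3" using N by simp
  then have "N ^ 3 \<le> 9 * (N - 1) ^ 3 / 2" using cb by linarith
  then have "N ^ 3 * W \<le> (9 * (N - 1) ^ 3 / 2) * W"
    using W by (intro mult_right_mono) auto
  also have "\<dots> = 9 * (a * b) / (N\<^sup>2 * D)"
    using N D by (simp add: a_def b_def field_simps power2_eq_square power3_eq_cube)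
  also have "\<dots> \<le> 9 * V\<^sup>2 / (N\<^sup>2 * D)"
    using Vab N D by (simp add: divide_right_mono)
  finally have W_part: "N ^ 3 * W \<le> 9 * V\<^sup>2 / (N\<^sup>2 * D)" .
  have "N ^ 3 * L \<le> N ^ 3 * W + N ^ 3 * D\<^sup>2"
    using L N by (simp add: distrib_left[symmetric] mult_left_mono)
  also have "\<dots> \<le> 9 * V\<^sup>2 * (1 / (N\<^sup>2 * D) + 1 / N)"
    using D_part W_part by (simp add: distrib_left)
  finally show ?thesis .
qed

theorem lemma7p1:
  "\<exists>C::real. C > 0 \<and>
     (\<forall>(n::nat) (m::nat) (p::real). n \<ge> 3 \<longrightarrow> m \<ge> 3 \<longrightarrow> 0 < p \<longrightarrow> p < 1 \<longrightarrow>
        real n ^ 2 * L2sq2 m p (contr0 (gbar2 m p) (gbar2 m p))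
          \<le> C * (var_edges n m p)^2 * (1 / (real n ^ 2 * phat m p * (1 - phat m p)))
      \<and> real n ^ 3 * L2sq1 m p (contr1 m p (gbar2 m p) (gbar2 m p))
          \<le> C * (var_edges n m p)^2 *
              (1 / (real n ^ 2 * phat m p * (1 - phat m p)) + 1 / real n))"
proof (intro exI[of _ 9] conjI allI impI)
  fix n m :: nat and p :: real
  assume n: "n \<ge> 3" and m: "m \<ge> 3" and p: "0 < p" "p < 1"
  then have p_bounds: "0 \<le> p" "p \<le> 1" and N: "3 \<le> real n" by simp_all
  interpret cube: indicator_kernel "cube m" "mu m p" g
    using p_bounds by (rule indicator_kernel_cube)
  have D_pos: "0 < phat m p * (1 - phat m p)"
    using phat_bounds[OF p] m by simp
  show "real n ^ 2 * L2sq2 m p (contr0 (gbar2 m p) (gbar2 m p))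
      \<le> 9 * (var_edges n m p)^2 * (1 / (real n ^ 2 * phat m p * (1 - phat m p)))"
    using contr0_estimate[OF N D_pos var_edges_ge_kernel[OF p_bounds] L2sq2_contr0_le[OF p_bounds]]
    by (simp add: mult.assoc)
  show "real n ^ 3 * L2sq1 m p (contr1 m p (gbar2 m p) (gbar2 m p))
      \<le> 9 * (var_edges n m p)^2 * (1 / (real n ^ 2 * phat m p * (1 - phat m p)) + 1 / real n)"
    using contr1_estimate[OF N D_pos cube.var1_nonneg var_edges_ge_kernel[OF p_bounds]
        var_edges_ge_var1[OF p_bounds] L2sq1_contr1_le[OF p_bounds]]
    by (simp add: mult.assoc)
qed simp

end
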